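(* Let $\mathcal{H}^{\mathcal{T}}$ be a teaching-hypothesis-class and run the online active learning procedure described in the context on $\mathcal{H}^{\mathcal{T}}$, with any sequence of candidate hypothesis sets satisfying $H^{\mathcal{T}}_{t+1}\subseteq H^{\mathcal{T}}_{t}$ for all $t$ and $H^{\mathcal{T}}_1=\mathcal{H}^{\mathcal{T}}$. Then for any $\delta>0$, with probability at least $1-\delta$, for every $T\in\mathbb{N}^{+}$ and all $h,h'\in H^{\mathcal{T}}_T$, \[ \left|L_T(h)-L_T(h')-\left(R(h)-R(h')\right)\right|\leq\left(1+\mathcal{L}(h,h')\right)\Delta_T, \qquad \Delta_{T}=\sqrt{(2/T)\log\!\big(2T(T+1)|\mathcal{H}^{\mathcal{T}}|^{2}/ \delta\big)}. \]
   Context: Let $\mathcal{D}$ be an unknown distribution on $\mathcal{X}\times\mathcal{Y}$ with marginal $\mathcal{D}_{\mathcal{X}}$ on $\mathcal{X}$. Hypotheses are maps $h:\mathcal{X}\to\mathcal{Z}$ and $\ell:\mathcal{Z}\times\mathcal{Y}\to[0,1]$ is a loss. The generalization error is $R(h)=\mathbb{E}_{(x,y)\sim\mathcal{D}}[\ell(h(x),y)]$ and the error disagreement is $\mathcal{L}(h,h')=\mathbb{E}_{x\sim\mathcal{D}_{\mathcal{X}}}\big[\max_{y}|\ell(h(x),y)-\ell(h'(x),y)|\big]$. Let $\mathcal{H}$ be a hypothesis class with optimal hypothesis $h^*=\arg\min_{h\in\mathcal{H}}R(h)$, and let $h^{\mathcal{T}}$ be a teaching hypothesis with $\mathcal{L}(h^*,h^{\mathcal{T}})<\epsilon$.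 A teaching-hypothesis-class is a finite hypothesis class $\mathcal{H}^{\mathcal{T}}$ with $h^{\mathcal{T}}=\arg\min_{h\in\mathcal{H}^{\mathcal{T}}}R(h)$. Online procedure: pairs $(x_t,y_t)$, $t=1,2,\dots$, are drawn i.i.d. from $\mathcal{D}$ and the learner sees $x_t$. At time $t$ the learner holds a candidate set $H^{\mathcal{T}}_t$ (determined by the past), computes $p_t=\max_{h,h'\in H^{\mathcal{T}}_t}\max_{y}|\ell(h(x_t),y)-\ell(h'(x_t),y)|$, draws $Q_t\in\{0,1\}$ from a Bernoulli distribution with success probability $p_t$, and queries $y_t$ iff $Q_t=1$. The importance-weighted empirical error is $L_t(h)=\frac{1}{t}\sum_{k=1}^{t}\frac{Q_k}{p_k}\ell(h(x_k),y_k)$ (terms with $Q_k=0$ are taken to be $0$). *)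

theory Defs
  imports "HOL-Probability.Probability"
begin

definition gen_err :: "('x \<times> 'y) measure \<Rightarrow> ('z \<Rightarrow> 'y \<Rightarrow> real) \<Rightarrow> ('x \<Rightarrow> 'z) \<Rightarrow> real" where
  "gen_err D loss h = (\<integral>p. loss (h (fst p)) (snd p) \<partial>D)"

definition pt_dis :: "('z \<Rightarrow> 'y \<Rightarrow> real) \<Rightarrow> ('x \<Rightarrow> 'z) \<Rightarrow> ('x \<Rightarrow> 'z) \<Rightarrow> 'x \<Rightarrow> real" where
  "pt_dis loss h h' x = (SUP y. \<bar>loss (h x) y - loss (h' x) y\<bar>)"

definition err_dis :: "('x \<times> 'y) measure \<Rightarrow> ('z \<Rightarrow> 'y \<Rightarrow> real) \<Rightarrow> ('x \<Rightarrow> 'z) \<Rightarrow> ('x \<Rightarrow> 'z) \<Rightarrow> real" where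
  "err_dis D loss h h' = (\<integral>p. pt_dis loss h h' (fst p) \<partial>D)"

text \<open>Query probability p_t for candidate set Hs at point x
  (max over pairs; taken to be 0 for an empty candidate set).\<close>
definition query_prob :: "('z \<Rightarrow> 'y \<Rightarrow> real) \<Rightarrow> ('x \<Rightarrow> 'z) set \<Rightarrow> 'x \<Rightarrow> real" where
  "query_prob loss Hs x = Max (insert 0 ((\<lambda>(h, h'). pt_dis loss h h' x) ` (Hs \<times> Hs)))"

text \<open>Sample path: \<omega> k = ((x_k, y_k), u_k) for k = 1, 2, ...; u_k is uniform on [0,1]
  and the query coin is Q_k = (u_k < p_k), a Bernoulli(p_k) draw. Hsel t \<omega> is the
  candidate set H_t.\<close>
definition query :: "('z \<Rightarrow> 'y \<Rightarrow> real) \<Rightarrow> (nat \<Rightarrow> (nat \<Rightarrow> ('x \<times> 'y) \<times> real) \<Rightarrow> ('x \<Rightarrow> 'z) set)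
    \<Rightarrow> nat \<Rightarrow> (nat \<Rightarrow> ('x \<times> 'y) \<times> real) \<Rightarrow> bool" where
  "query loss Hsel k \<omega> = (snd (\<omega> k) < query_prob loss (Hsel k \<omega>) (fst (fst (\<omega> k))))"

definition iw_err :: "('z \<Rightarrow> 'y \<Rightarrow> real) \<Rightarrow> (nat \<Rightarrow> (nat \<Rightarrow> ('x \<times> 'y) \<times> real) \<Rightarrow> ('x \<Rightarrow> 'z) set)
    \<Rightarrow> nat \<Rightarrow> ('x \<Rightarrow> 'z) \<Rightarrow> (nat \<Rightarrow> ('x \<times> 'y) \<times> real) \<Rightarrow> real" where
  "iw_err loss Hsel T h \<omega> = (1 / real T) * (\<Sum>k = 1..T.
     (if query loss Hsel k \<omega>
      then loss (h (fst (fst (\<omega> k)))) (snd (fst (\<omega> k)))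
           / query_prob loss (Hsel k \<omega>) (fst (fst (\<omega> k)))
      else 0))"

definition Delta :: "nat \<Rightarrow> nat \<Rightarrow> real \<Rightarrow> real" where
  "Delta T n \<delta> = sqrt ((2 / real T) * ln (2 * real T * (real T + 1) * (real n)^2 / \<delta>))"

definition sample_space :: "('x \<times> 'y) measure \<Rightarrow> (nat \<Rightarrow> ('x \<times> 'y) \<times> real) measure" where
  "sample_space D = (\<Pi>\<^sub>M k\<in>UNIV. D \<Otimes>\<^sub>M uniform_measure lborel {0..1::real})"

end

theory Submission
  imports Defs
begin

text \<open>
  Fix a pair h, h' of the finite class. In round k the importance-weighted loss difference
  has conditional expectation \<open>\<ell>(h x, y) - \<ell>(h' x, y)\<close> over the query coin, and because
  the query probability dominates \<open>|\<ell>(h x, y) - \<ell>(h' x, y)|\<close> it lies in [-1, 1]. Centred by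
  R(h) - R(h') these increments form a martingale difference sequence, to which Hoeffding's lemma
  applies conditionally on the past; the resulting Azuma-Hoeffding bound makes a deviation of
  \<open>T \<Delta>\<^sub>T\<close> have probability at most \<open>2 exp (-T \<Delta>\<^sub>T\<^sup>2 / 2) = \<delta> / (T (T + 1) |HT|\<^sup>2)\<close>.
  A union bound over the pairs and over T (a telescoping series) leaves total failure
  probability \<delta>. The bound obtained does not even need the factor 1 + \<L>(h, h').
\<close>

lemma abs_loss_diff_le_pt_dis:
  assumes "\<And>z y. 0 \<le> loss z y \<and> loss z y \<le> 1"
  shows "\<bar>loss (h x) y - loss (h' x) y\<bar> \<le> pt_dis loss h h' x"
  unfolding pt_dis_def
proof (rule cSUP_upper)
  show "bdd_above (range (\<lambda>y. \<bar>loss (h x) y - loss (h' x) y\<bar>))"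
  proof (rule bdd_aboveI[where M=1], clarify)
    fix y show "\<bar>loss (h x) y - loss (h' x) y\<bar> \<le> 1"
      using assms[of "h x" y] assms[of "h' x" y] by linarith
  qed
qed simp

lemma pt_dis_le_one:
  assumes "\<And>z y. 0 \<le> loss z y \<and> loss z y \<le> 1"
  shows "pt_dis loss h h' x \<le> 1"
  unfolding pt_dis_def
proof (rule cSUP_least)
  fix y show "\<bar>loss (h x) y - loss (h' x) y\<bar> \<le> 1"
    using assms[of "h x" y] assms[of "h' x" y] by linarith
qed simp

lemma err_dis_nonneg:
  assumes "\<And>z y. 0 \<le> loss z y \<and> loss z y \<le> 1"
  shows "0 \<le> err_dis D loss h h'"
  unfolding err_dis_def
  by (rule Bochner_Integration.integral_nonneg)
     (rule order_trans[OF abs_ge_zero abs_loss_diff_le_pt_dis[OF assms]])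

lemma pt_dis_le_query_prob:
  assumes "finite Hs" "h \<in> Hs" "h' \<in> Hs"
  shows "pt_dis loss h h' x \<le> query_prob loss Hs x"
  unfolding query_prob_def by (rule Max_ge) (use assms in \<open>auto intro!: image_eqI[where x="(h, h')"]\<close>)

lemma query_prob_nonneg: "finite Hs \<Longrightarrow> 0 \<le> query_prob loss Hs x"
  unfolding query_prob_def by (rule Max_ge) auto

lemma query_prob_le_one:
  assumes "finite Hs" "\<And>z y. 0 \<le> loss z y \<and> loss z y \<le> 1"
  shows "query_prob loss Hs x \<le> 1"
  unfolding query_prob_def using assms by (subst Max_le_iff) (auto intro: pt_dis_le_one)

lemma borel_measurable_query_prob:
  assumes "finite Hs"
    and "\<And>h h'. h \<in> Hs \<Longrightarrow> h' \<in> Hs \<Longrightarrow> (\<lambda>q. pt_dis loss h h' (f q)) \<in> borel_measurable M"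
  shows "(\<lambda>q. query_prob loss Hs (f q)) \<in> borel_measurable M"
proof -
  let ?F = "\<lambda>i q. case i of None \<Rightarrow> 0 | Some (h, h') \<Rightarrow> pt_dis loss h h' (f q)"
  have "(\<lambda>q. Max ((\<lambda>i. ?F i q) ` insert None (Some ` (Hs \<times> Hs)))) \<in> borel_measurable M"
    using assms by (intro borel_measurable_Max) (auto split: option.split)
  then show ?thesis
    unfolding query_prob_def by (simp add: image_image case_prod_beta')
qed

abbreviation uniform01 :: "real measure" where
  "uniform01 \<equiv> uniform_measure lborel {0..1}"

lemma prob_space_uniform01: "prob_space uniform01"
  by (rule prob_space_uniform_measure) (simp_all add: emeasure_lborel_Icc)

lemma integral_uniform01_indicator_lessThan:
  assumes "0 \<le> t" "t \<le> 1"
  shows "(\<integral>u. indicator {..<t} u * c \<partial>uniform01) = t * c"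
proof -
  have "{0..1} \<inter> {..<t} = {0..<t}" using assms by auto
  then have "measure uniform01 {..<t} = t"
    using assms by (simp add: measure_def emeasure_uniform_measure emeasure_lborel_Ico divide_ennreal_def)
  then show ?thesis by simp
qed

lemma Delta_pos_exp:
  assumes "T \<ge> 1" "n \<ge> 1" "0 < \<delta>" "\<delta> < 1"
  shows Delta_pos: "Delta T n \<delta> > 0"
    and exp_Delta:
      "exp (- real T * (Delta T n \<delta>)\<^sup>2 / 2) = \<delta> / (2 * real T * (real T + 1) * (real n)\<^sup>2)"
proof -
  define c where "c = 2 * real T * (real T + 1) * (real n)\<^sup>2"
  have "1 * 1 * 1 * 1 \<le> 2 * real T * (real T + 1) * (real n)\<^sup>2"
    using assms(1,2) by (intro mult_mono) auto
  then have "c / \<delta> > 1"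
    using assms(3,4) by (simp add: c_def less_divide_eq)
  then have ln_pos: "ln (c / \<delta>) > 0" by simp
  then show "Delta T n \<delta> > 0"
    using assms(1) by (simp add: Delta_def c_def)
  have "real T * (Delta T n \<delta>)\<^sup>2 / 2 = ln (c / \<delta>)"
    using assms(1) ln_pos by (simp add: Delta_def c_def)
  then have "exp (- real T * (Delta T n \<delta>)\<^sup>2 / 2) = exp (- ln (c / \<delta>))"
    by (metis minus_divide_left mult_minus_left)
  also have "\<dots> = \<delta> / c"
    using \<open>c / \<delta> > 1\<close> assms(3) by (simp add: exp_minus)
  finally show "exp (- real T * (Delta T n \<delta>)\<^sup>2 / 2) = \<delta> / (2 * real T * (real T + 1) * (real n)\<^sup>2)"
    by (simp add: c_def)
qed

lemma telescoping_sums_div_Suc: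
  fixes \<delta> :: real
  shows "(\<lambda>i. \<delta> / (real (Suc i) * (real (Suc i) + 1))) sums \<delta>"
proof -
  have "(\<lambda>i. \<delta> / real (Suc i)) \<longlonglongrightarrow> 0"
    using tendsto_mult_right_zero[OF LIMSEQ_inverse_real_of_nat, of \<delta>] by (simp add: divide_inverse)
  from telescope_sums'[OF this] have "(\<lambda>i. \<delta> / real (Suc i) - \<delta> / real (Suc (Suc i))) sums \<delta>"
    by simp
  moreover have "\<delta> / real (Suc i) - \<delta> / real (Suc (Suc i))
      = \<delta> / (real (Suc i) * (real (Suc i) + 1))" for i
    by (simp add: field_simps)
  ultimately show ?thesis by simp
qed

lemma (in prob_space) prob_UN_le_telescoping:
  assumes "\<And>T. T \<ge> 1 \<Longrightarrow> B T \<in> events"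
    and "\<And>T. T \<ge> 1 \<Longrightarrow> prob (B T) \<le> \<delta> / (real T * (real T + 1))"
  shows "prob (\<Union>T\<in>{1..}. B T) \<le> \<delta>"
proof -
  have UN_eq: "(\<Union>T\<in>{1..}. B T) = (\<Union>i. B (Suc i))"
    by (auto simp: atLeast_def) (metis Suc_le_D)
  have bound: "prob (B (Suc i)) \<le> \<delta> / (real (Suc i) * (real (Suc i) + 1))" for i
    using assms(2)[of "Suc i"] by simp
  have summable_bound: "summable (\<lambda>i. \<delta> / (real (Suc i) * (real (Suc i) + 1)))"
    using telescoping_sums_div_Suc by (rule sums_summable)
  have summable_prob: "summable (\<lambda>i. prob (B (Suc i)))"
    by (rule summable_comparison_test'[OF summable_bound, where N=0]) (use bound in simp)
  have "prob (\<Union>i. B (Suc i)) \<le> (\<Sum>i. prob (B (Suc i)))"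
    using assms(1) summable_prob by (intro finite_measure_subadditive_countably) auto
  also have "\<dots> \<le> (\<Sum>i. \<delta> / (real (Suc i) * (real (Suc i) + 1)))"
    by (rule suminf_le[OF bound summable_prob summable_bound])
  also have "\<dots> = \<delta>"
    using telescoping_sums_div_Suc by (rule sums_unique[symmetric])
  finally show ?thesis unfolding UN_eq .
qed

lemma borel_measurable_finite_set_valued:
  fixes g :: "'b set \<Rightarrow> 'a \<Rightarrow> real"
  assumes "finite B"
    and F_subset: "\<And>\<omega>. \<omega> \<in> space M \<Longrightarrow> F \<omega> \<subseteq> B"
    and F_meas: "\<And>b. b \<in> B \<Longrightarrow> {\<omega> \<in> space M. b \<in> F \<omega>} \<in> sets M"
    and g_meas: "\<And>s. s \<subseteq> B \<Longrightarrow> g s \<in> borel_measurable M"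
  shows "(\<lambda>\<omega>. g (F \<omega>) \<omega>) \<in> borel_measurable M"
proof -
  have level_set: "{\<omega> \<in> space M. F \<omega> = s} \<in> sets M" if "s \<subseteq> B" for s
  proof -
    have "{\<omega> \<in> space M. F \<omega> = s} = {\<omega> \<in> space M. \<forall>b\<in>B. b \<in> F \<omega> \<longleftrightarrow> b \<in> s}"
      using F_subset that by blast
    also have "\<dots> \<in> sets M"
      using F_meas \<open>finite B\<close>
      by (intro sets.sets_Collect_finite_All) (auto simp: Collect_neg_eq[symmetric] sets.sets_Collect_neg)
    finally show ?thesis .
  qed
  have "(\<lambda>\<omega>. \<Sum>s\<in>Pow B. if F \<omega> = s then g s \<omega> else 0) \<in> borel_measurable M"
    using level_set g_meas by (intro borel_measurable_sum measurable_If_set) auto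
  moreover have "(\<Sum>s\<in>Pow B. if F \<omega> = s then g s \<omega> else 0) = g (F \<omega>) \<omega>" if "\<omega> \<in> space M" for \<omega>
    using F_subset[OF that] \<open>finite B\<close> by (simp add: sum.delta')
  ultimately show ?thesis
    by (rule measurable_cong[THEN iffD1, rotated])
qed

context sequence_space
begin

text \<open>Splitting the sequence at k (comb_seq) turns the integral into an iterated one in
  which f is constant and g only sees the k-th coordinate of the inner sequence.\<close>

lemma nn_integral_mult_adapted_le:
  fixes f g :: "(nat \<Rightarrow> 'a) \<Rightarrow> ennreal"
  assumes [measurable]: "f \<in> borel_measurable S" "g \<in> borel_measurable S"
    and f_prefix: "\<And>\<omega> \<omega>'. (\<forall>j<k. \<omega> j = \<omega>' j) \<Longrightarrow> f \<omega> = f \<omega>'"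
    and g_prefix: "\<And>\<omega> \<omega>'. (\<forall>j\<le>k. \<omega> j = \<omega>' j) \<Longrightarrow> g \<omega> = g \<omega>'"
    and g_bound: "\<And>\<omega>. \<omega> \<in> space S \<Longrightarrow> (\<integral>\<^sup>+s. g (fun_upd \<omega> k s) \<partial>M) \<le> C"
  shows "(\<integral>\<^sup>+\<omega>. f \<omega> * g \<omega> \<partial>S) \<le> C * (\<integral>\<^sup>+\<omega>. f \<omega> \<partial>S)"
proof -
  have "(\<integral>\<^sup>+\<omega>. f \<omega> * g \<omega> \<partial>S)
      = (\<integral>\<^sup>+p. f (comb_seq k (fst p) (snd p)) * g (comb_seq k (fst p) (snd p)) \<partial>(S \<Otimes>\<^sub>M S))"
    by (subst PiM_comb_seq[symmetric, of k], subst nn_integral_distr)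
       (auto simp: split_beta' intro!: measurable_comb_seq)
  also have "\<dots> = (\<integral>\<^sup>+\<omega>. \<integral>\<^sup>+\<omega>'. f (comb_seq k \<omega> \<omega>') * g (comb_seq k \<omega> \<omega>') \<partial>S \<partial>S)"
    by (subst sigma_finite_measure.nn_integral_fst[symmetric])
       (auto intro: P.sigma_finite_measure_axioms)
  also have "\<dots> \<le> (\<integral>\<^sup>+\<omega>. f \<omega> * C \<partial>S)"
  proof (rule nn_integral_mono)
    fix \<omega> assume \<omega>: "\<omega> \<in> space S"
    have g_upd [measurable]: "(\<lambda>s. g (fun_upd \<omega> k s)) \<in> borel_measurable M"
      by (rule measurable_compose[OF _ assms(2)]) (rule measurable_fun_upd[where J=UNIV], auto simp: \<omega>)
    have "f (comb_seq k \<omega> \<omega>') = f \<omega>" for \<omega>'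
      by (rule f_prefix) (simp add: comb_seq_less)
    moreover have "g (comb_seq k \<omega> \<omega>') = g (fun_upd \<omega> k (\<omega>' 0))" for \<omega>'
      by (rule g_prefix) (auto simp: comb_seq_def)
    ultimately have "(\<integral>\<^sup>+\<omega>'. f (comb_seq k \<omega> \<omega>') * g (comb_seq k \<omega> \<omega>') \<partial>S)
        = f \<omega> * (\<integral>\<^sup>+\<omega>'. g (fun_upd \<omega> k (\<omega>' 0)) \<partial>S)"
      by (simp add: nn_integral_cmult)
    also have "(\<integral>\<^sup>+\<omega>'. g (fun_upd \<omega> k (\<omega>' 0)) \<partial>S) = (\<integral>\<^sup>+s. g (fun_upd \<omega> k s) \<partial>M)"
      using PiM_component[of 0] nn_integral_distr[of "\<lambda>\<omega>'. \<omega>' 0" S M "\<lambda>s. g (fun_upd \<omega> k s)"] by simp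
    finally show "(\<integral>\<^sup>+\<omega>'. f (comb_seq k \<omega> \<omega>') * g (comb_seq k \<omega> \<omega>') \<partial>S) \<le> f \<omega> * C"
      using g_bound[OF \<omega>] by (simp add: mult_left_mono)
  qed
  also have "\<dots> = C * (\<integral>\<^sup>+\<omega>. f \<omega> \<partial>S)"
    by (simp add: mult.commute nn_integral_cmult)
  finally show ?thesis .
qed

lemma nn_integral_exp_sum_le:
  fixes X :: "nat \<Rightarrow> (nat \<Rightarrow> 'a) \<Rightarrow> real"
  assumes X_meas: "\<And>k. k \<ge> 1 \<Longrightarrow> X k \<in> borel_measurable S"
    and X_prefix: "\<And>k \<omega> \<omega>'. k \<ge> 1 \<Longrightarrow> (\<forall>j\<le>k. \<omega> j = \<omega>' j) \<Longrightarrow> X k \<omega> = X k \<omega>'"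
    and X_mgf: "\<And>k \<omega>. k \<ge> 1 \<Longrightarrow> \<omega> \<in> space S \<Longrightarrow>
       (\<integral>\<^sup>+s. ennreal (exp (l * X k (fun_upd \<omega> k s))) \<partial>M) \<le> ennreal (exp (l\<^sup>2 / 2))"
  shows "(\<integral>\<^sup>+\<omega>. ennreal (exp (l * (\<Sum>k = 1..T. X k \<omega>))) \<partial>S) \<le> ennreal (exp (real T * l\<^sup>2 / 2))"
proof (induction T)
  case 0
  then show ?case by (simp add: P.emeasure_space_1)
next
  case (Suc T)
  have [measurable]: "(\<lambda>\<omega>. \<Sum>k = 1..T. X k \<omega>) \<in> borel_measurable S" "X (Suc T) \<in> borel_measurable S"
    using X_meas by auto
  have "(\<integral>\<^sup>+\<omega>. ennreal (exp (l * (\<Sum>k = 1..Suc T. X k \<omega>))) \<partial>S)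
      = (\<integral>\<^sup>+\<omega>. ennreal (exp (l * (\<Sum>k = 1..T. X k \<omega>))) * ennreal (exp (l * X (Suc T) \<omega>)) \<partial>S)"
    by (simp add: distrib_left exp_add ennreal_mult)
  also have "\<dots> \<le> ennreal (exp (l\<^sup>2 / 2)) * (\<integral>\<^sup>+\<omega>. ennreal (exp (l * (\<Sum>k = 1..T. X k \<omega>))) \<partial>S)"
  proof (rule nn_integral_mult_adapted_le[where k="Suc T"])
    show "ennreal (exp (l * (\<Sum>k = 1..T. X k \<omega>))) = ennreal (exp (l * (\<Sum>k = 1..T. X k \<omega>')))"
      if "\<forall>j<Suc T. \<omega> j = \<omega>' j" for \<omega> \<omega>'
      using that by (auto intro!: sum.cong X_prefix)
    show "ennreal (exp (l * X (Suc T) \<omega>)) = ennreal (exp (l * X (Suc T) \<omega>'))"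
      if "\<forall>j\<le>Suc T. \<omega> j = \<omega>' j" for \<omega> \<omega>'
      using X_prefix[OF _ that] by simp
    show "(\<integral>\<^sup>+s. ennreal (exp (l * X (Suc T) (fun_upd \<omega> (Suc T) s))) \<partial>M) \<le> ennreal (exp (l\<^sup>2 / 2))"
      if "\<omega> \<in> space S" for \<omega>
      using X_mgf[OF _ that] by simp
  qed measurable
  also have "\<dots> \<le> ennreal (exp (l\<^sup>2 / 2)) * ennreal (exp (real T * l\<^sup>2 / 2))"
    by (rule mult_left_mono[OF Suc.IH]) simp
  also have "\<dots> = ennreal (exp (real (Suc T) * l\<^sup>2 / 2))"
    by (simp add: ennreal_mult[symmetric] exp_add[symmetric] algebra_simps add_divide_distrib)
  finally show ?case .
qed

lemma emeasure_sum_ge_le: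
  fixes X :: "nat \<Rightarrow> (nat \<Rightarrow> 'a) \<Rightarrow> real"
  assumes X_meas: "\<And>k. k \<ge> 1 \<Longrightarrow> X k \<in> borel_measurable S"
    and X_prefix: "\<And>k \<omega> \<omega>'. k \<ge> 1 \<Longrightarrow> (\<forall>j\<le>k. \<omega> j = \<omega>' j) \<Longrightarrow> X k \<omega> = X k \<omega>'"
    and X_mgf: "\<And>l k \<omega>. k \<ge> 1 \<Longrightarrow> \<omega> \<in> space S \<Longrightarrow>
       (\<integral>\<^sup>+s. ennreal (exp (l * X k (fun_upd \<omega> k s))) \<partial>M) \<le> ennreal (exp (l\<^sup>2 / 2))"
    and "\<epsilon> > 0"
  shows "emeasure S {\<omega> \<in> space S. real T * \<epsilon> \<le> (\<Sum>k = 1..T. X k \<omega>)} \<le> ennreal (exp (- real T * \<epsilon>\<^sup>2 / 2))"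
proof -
  have "emeasure S {\<omega> \<in> space S. real T * \<epsilon> \<le> (\<Sum>k = 1..T. X k \<omega>)}
      \<le> ennreal (exp (- \<epsilon> * (real T * \<epsilon>)))
        * (\<integral>\<^sup>+\<omega>. ennreal (exp (\<epsilon> * (\<Sum>k = 1..T. X k \<omega>))) * indicator (space S) \<omega> \<partial>S)"
    using X_meas \<open>\<epsilon> > 0\<close> by (intro Chernoff_ineq_nn_integral_ge) auto
  also have "\<dots> \<le> ennreal (exp (- \<epsilon> * (real T * \<epsilon>))) * ennreal (exp (real T * \<epsilon>\<^sup>2 / 2))"
  proof (intro mult_left_mono)
    have "(\<integral>\<^sup>+\<omega>. ennreal (exp (\<epsilon> * (\<Sum>k = 1..T. X k \<omega>))) * indicator (space S) \<omega> \<partial>S)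
        = (\<integral>\<^sup>+\<omega>. ennreal (exp (\<epsilon> * (\<Sum>k = 1..T. X k \<omega>))) \<partial>S)"
      by (rule nn_integral_cong) simp
    with nn_integral_exp_sum_le[OF X_meas X_prefix X_mgf]
    show "(\<integral>\<^sup>+\<omega>. ennreal (exp (\<epsilon> * (\<Sum>k = 1..T. X k \<omega>))) * indicator (space S) \<omega> \<partial>S)
        \<le> ennreal (exp (real T * \<epsilon>\<^sup>2 / 2))" by simp
  qed simp
  also have "\<dots> = ennreal (exp (- real T * \<epsilon>\<^sup>2 / 2))"
    by (simp add: ennreal_mult[symmetric] exp_add[symmetric] power2_eq_square algebra_simps)
  finally show ?thesis .
qed

lemma measure_abs_sum_ge_le:
  fixes X :: "nat \<Rightarrow> (nat \<Rightarrow> 'a) \<Rightarrow> real"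
  assumes X_meas: "\<And>k. k \<ge> 1 \<Longrightarrow> X k \<in> borel_measurable S"
    and X_prefix: "\<And>k \<omega> \<omega>'. k \<ge> 1 \<Longrightarrow> (\<forall>j\<le>k. \<omega> j = \<omega>' j) \<Longrightarrow> X k \<omega> = X k \<omega>'"
    and X_mgf: "\<And>l k \<omega>. k \<ge> 1 \<Longrightarrow> \<omega> \<in> space S \<Longrightarrow>
       (\<integral>\<^sup>+s. ennreal (exp (l * X k (fun_upd \<omega> k s))) \<partial>M) \<le> ennreal (exp (l\<^sup>2 / 2))"
    and "\<epsilon> > 0"
  shows "measure S {\<omega> \<in> space S. real T * \<epsilon> \<le> \<bar>\<Sum>k = 1..T. X k \<omega>\<bar>} \<le> 2 * exp (- real T * \<epsilon>\<^sup>2 / 2)"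
proof -
  let ?upper = "{\<omega> \<in> space S. real T * \<epsilon> \<le> (\<Sum>k = 1..T. X k \<omega>)}"
    and ?lower = "{\<omega> \<in> space S. real T * \<epsilon> \<le> (\<Sum>k = 1..T. - X k \<omega>)}"
  have [measurable]: "(\<lambda>\<omega>. \<Sum>k = 1..T. X k \<omega>) \<in> borel_measurable S"
      "(\<lambda>\<omega>. \<Sum>k = 1..T. - X k \<omega>) \<in> borel_measurable S"
    using X_meas by auto
  have "measure S ?upper \<le> exp (- real T * \<epsilon>\<^sup>2 / 2)"
    using emeasure_sum_ge_le[OF X_meas X_prefix X_mgf \<open>\<epsilon> > 0\<close>]
    by (simp add: P.emeasure_eq_measure)
  moreover have "measure S ?lower \<le> exp (- real T * \<epsilon>\<^sup>2 / 2)"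
  proof -
    have "(\<integral>\<^sup>+s. ennreal (exp (l * - X k (fun_upd \<omega> k s))) \<partial>M) \<le> ennreal (exp (l\<^sup>2 / 2))"
      if "k \<ge> 1" "\<omega> \<in> space S" for l k \<omega>
      using X_mgf[OF that, of "- l"] by simp
    from emeasure_sum_ge_le[of "\<lambda>k \<omega>. - X k \<omega>", OF _ _ this \<open>\<epsilon> > 0\<close>]
    show ?thesis using X_meas X_prefix by (simp add: P.emeasure_eq_measure)
  qed
  moreover have "measure S (?upper \<union> ?lower) \<le> measure S ?upper + measure S ?lower"
    by (rule measure_Un_le) measurable
  moreover have "{\<omega> \<in> space S. real T * \<epsilon> \<le> \<bar>\<Sum>k = 1..T. X k \<omega>\<bar>} = ?upper \<union> ?lower"
    by (auto simp: sum_negf abs_if)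
  ultimately show ?thesis by simp
qed

end

definition iw_loss ::
    "('z \<Rightarrow> 'y \<Rightarrow> real) \<Rightarrow> ('x \<Rightarrow> 'z) set \<Rightarrow> ('x \<Rightarrow> 'z) \<Rightarrow> ('x \<times> 'y) \<times> real \<Rightarrow> real" where
  "iw_loss loss Hs h q =
     (let x = fst (fst q); p = query_prob loss Hs x
      in if snd q < p then loss (h x) (snd (fst q)) / p else 0)"

lemma iw_err_eq_sum_iw_loss:
  "iw_err loss Hsel T h \<omega> = (\<Sum>k = 1..T. iw_loss loss (Hsel k \<omega>) h (\<omega> k)) / real T"
  by (simp add: iw_err_def iw_loss_def query_def Let_def)

locale finite_hypothesis_class =
  fixes D :: "('x \<times> 'y) measure" and loss :: "'z \<Rightarrow> 'y \<Rightarrow> real" and HT :: "('x \<Rightarrow> 'z) set"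
  assumes prob_space_D: "prob_space D"
    and loss_range: "\<And>z y. 0 \<le> loss z y \<and> loss z y \<le> 1"
    and loss_meas: "\<And>h. h \<in> HT \<Longrightarrow> (\<lambda>p. loss (h (fst p)) (snd p)) \<in> borel_measurable D"
    and dis_meas: "\<And>h h'. h \<in> HT \<Longrightarrow> h' \<in> HT \<Longrightarrow> (\<lambda>p. pt_dis loss h h' (fst p)) \<in> borel_measurable D"
    and finite_HT: "finite HT"
begin

lemma sequence_space_rounds: "sequence_space (D \<Otimes>\<^sub>M uniform01)"
proof -
  have "prob_space (D \<Otimes>\<^sub>M uniform01)"
    using prob_space_D prob_space_uniform01 by (rule prob_space_pair)
  then show ?thesis
    unfolding sequence_space_def product_prob_space_def product_sigma_finite_def
      product_prob_space_axioms_def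
    by (auto intro: prob_space_imp_sigma_finite)
qed

lemma abs_loss_diff_le_query_prob:
  assumes "Hs \<subseteq> HT" "h \<in> Hs" "h' \<in> Hs"
  shows "\<bar>loss (h x) y - loss (h' x) y\<bar> \<le> query_prob loss Hs x"
  using abs_loss_diff_le_pt_dis[OF loss_range]
    pt_dis_le_query_prob[OF finite_subset[OF assms(1) finite_HT] assms(2,3)]
  by (rule order_trans)

lemma abs_iw_loss_diff_le_one:
  assumes "Hs \<subseteq> HT" "h \<in> Hs" "h' \<in> Hs"
  shows "\<bar>iw_loss loss Hs h q - iw_loss loss Hs h' q\<bar> \<le> 1"
proof -
  obtain x y u where q: "q = ((x, y), u)" by (metis prod.collapse)
  from abs_loss_diff_le_query_prob[OF assms, of x y] show ?thesis
    by (auto simp: iw_loss_def q Let_def diff_divide_distrib[symmetric] abs_divide divide_le_eq_1)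
qed

lemma borel_measurable_iw_loss:
  assumes "Hs \<subseteq> HT" "h \<in> HT"
  shows "iw_loss loss Hs h \<in> borel_measurable (D \<Otimes>\<^sub>M uniform01)"
proof -
  have [measurable]: "(\<lambda>q. query_prob loss Hs (fst (fst q))) \<in> borel_measurable (D \<Otimes>\<^sub>M uniform01)"
    using assms finite_HT
    by (intro borel_measurable_query_prob measurable_compose[OF measurable_fst dis_meas])
       (auto intro: finite_subset)
  have [measurable]: "(\<lambda>q. loss (h (fst (fst q))) (snd (fst q))) \<in> borel_measurable (D \<Otimes>\<^sub>M uniform01)"
    by (rule measurable_compose[OF measurable_fst loss_meas[OF assms(2)]])
  show ?thesis
    unfolding iw_loss_def[abs_def] Let_def by measurable
qed

lemma integral_iw_loss_diff:
  assumes "Hs \<subseteq> HT" "h \<in> Hs" "h' \<in> Hs"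
  shows "(\<integral>u. iw_loss loss Hs h (a, u) - iw_loss loss Hs h' (a, u) \<partial>uniform01)
    = loss (h (fst a)) (snd a) - loss (h' (fst a)) (snd a)"
proof -
  obtain x y where a: "a = (x, y)" by (metis prod.collapse)
  let ?p = "query_prob loss Hs x" and ?d = "loss (h x) y - loss (h' x) y"
  have fin: "finite Hs" using assms(1) finite_HT by (rule finite_subset)
  have "iw_loss loss Hs h (a, u) - iw_loss loss Hs h' (a, u) = indicator {..<?p} u * (?d / ?p)" for u
    by (simp add: iw_loss_def a Let_def indicator_def diff_divide_distrib)
  then have "(\<integral>u. iw_loss loss Hs h (a, u) - iw_loss loss Hs h' (a, u) \<partial>uniform01)
      = (\<integral>u. indicator {..<?p} u * (?d / ?p) \<partial>uniform01)"
    by presburger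
  also have "\<dots> = ?p * (?d / ?p)"
    using query_prob_nonneg[OF fin] query_prob_le_one[OF fin loss_range]
    by (rule integral_uniform01_indicator_lessThan)
  also have "\<dots> = ?d"
    \<comment> \<open>if \<open>?p = 0\<close> then \<open>?d = 0\<close>, so the junk value of \<open>?d / 0\<close> does not matter\<close>
    using abs_loss_diff_le_query_prob[OF assms, of x y] by (cases "?p = 0") auto
  finally show ?thesis by (simp add: a)
qed

lemma expectation_iw_loss_diff:
  assumes "Hs \<subseteq> HT" "h \<in> Hs" "h' \<in> Hs"
  shows "(\<integral>q. iw_loss loss Hs h q - iw_loss loss Hs h' q \<partial>(D \<Otimes>\<^sub>M uniform01))
    = gen_err D loss h - gen_err D loss h'"
proof -
  interpret D: prob_space D by (rule prob_space_D)
  interpret DU: pair_prob_space D uniform01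
    by (intro pair_prob_space.intro pair_sigma_finite.intro prob_space_uniform01 prob_space_D
        prob_space_imp_sigma_finite)
  have hHT: "h \<in> HT" "h' \<in> HT" using assms by auto
  have loss_integrable: "integrable D (\<lambda>p. loss (g (fst p)) (snd p))" if "g \<in> HT" for g
    by (rule D.integrable_const_bound[where B=1]) (use loss_range loss_meas[OF that] in auto)
  have "(\<integral>q. iw_loss loss Hs h q - iw_loss loss Hs h' q \<partial>(D \<Otimes>\<^sub>M uniform01))
      = (\<integral>a. \<integral>u. iw_loss loss Hs h (a, u) - iw_loss loss Hs h' (a, u) \<partial>uniform01 \<partial>D)"
    using borel_measurable_iw_loss[OF assms(1)] hHT abs_iw_loss_diff_le_one[OF assms]
    by (intro DU.integral_fst'[symmetric] DU.integrable_const_bound[where B=1]) auto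
  also have "\<dots> = gen_err D loss h - gen_err D loss h'"
    using loss_integrable[OF hHT(1)] loss_integrable[OF hHT(2)]
    by (simp add: integral_iw_loss_diff[OF assms] gen_err_def)
  finally show ?thesis .
qed

lemma iw_loss_diff_mgf_le:
  assumes "Hs \<subseteq> HT" "h \<in> Hs" "h' \<in> Hs"
  shows "(\<integral>\<^sup>+q. ennreal (exp (l * (iw_loss loss Hs h q - iw_loss loss Hs h' q
      - (gen_err D loss h - gen_err D loss h')))) \<partial>(D \<Otimes>\<^sub>M uniform01)) \<le> ennreal (exp (l\<^sup>2 / 2))"
proof -
  let ?G = "\<lambda>q. iw_loss loss Hs h q - iw_loss loss Hs h' q"
  have "h \<in> HT" "h' \<in> HT" using assms by auto
  then have [measurable]: "?G \<in> borel_measurable (D \<Otimes>\<^sub>M uniform01)"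
    using borel_measurable_iw_loss[OF assms(1)] by measurable
  have G_bound: "?G q \<in> {-1..1}" for q
    using abs_iw_loss_diff_le_one[OF assms, of q] by (auto simp: abs_le_iff)
  have "prob_space (D \<Otimes>\<^sub>M uniform01)"
    using prob_space_D prob_space_uniform01 by (rule prob_space_pair)
  then interpret G: interval_bounded_random_variable "D \<Otimes>\<^sub>M uniform01" ?G "-1" 1
    by (intro interval_bounded_random_variable.intro interval_bounded_random_variable_axioms.intro)
       (use G_bound in auto)
  interpret minus_G: interval_bounded_random_variable "D \<Otimes>\<^sub>M uniform01" "\<lambda>q. - ?G q" "-1" 1
  proof unfold_locales
    show "AE q in D \<Otimes>\<^sub>M uniform01. - ?G q \<in> {-1..1}"
      using G_bound by (intro AE_I2) (metis atLeastAtMost_iff minus_le_iff neg_le_iff_le)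
  qed measurable
  note expectation_G = expectation_iw_loss_diff[OF assms]
  consider "l > 0" | "l < 0" | "l = 0" by linarith
  then show ?thesis
  proof cases
    case 1
    from G.Hoeffdings_lemma_nn_integral[OF 1] show ?thesis
      by (simp add: expectation_G power2_eq_square)
  next
    case 2
    from minus_G.Hoeffdings_lemma_nn_integral[of "-l",
        unfolded Bochner_Integration.integral_minus expectation_G] 2
    show ?thesis
      by (simp add: power2_eq_square algebra_simps)
  qed (simp add: G.emeasure_space_1)
qed

end

locale active_learning_run = finite_hypothesis_class D loss HT
  for D :: "('x \<times> 'y) measure" and loss :: "'z \<Rightarrow> 'y \<Rightarrow> real" and HT :: "('x \<Rightarrow> 'z) set" +
  fixes Hsel :: "nat \<Rightarrow> (nat \<Rightarrow> ('x \<times> 'y) \<times> real) \<Rightarrow> ('x \<Rightarrow> 'z) set"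
  assumes Hsel_1: "\<And>\<omega>. Hsel 1 \<omega> = HT"
    and Hsel_mono: "\<And>t \<omega>. t \<ge> 1 \<Longrightarrow> Hsel (Suc t) \<omega> \<subseteq> Hsel t \<omega>"
    and Hsel_past: "\<And>t \<omega> \<omega>'. (\<forall>k<t. \<omega> k = \<omega>' k) \<Longrightarrow> Hsel t \<omega> = Hsel t \<omega>'"
    and Hsel_meas: "\<And>t h. {\<omega> \<in> space (sample_space D). h \<in> Hsel t \<omega>} \<in> sets (sample_space D)"
begin

sublocale rounds: sequence_space "D \<Otimes>\<^sub>M uniform01"
  by (rule sequence_space_rounds)

lemma sample_space_eq: "sample_space D = rounds.S"
  by (simp add: sample_space_def)

lemma Hsel_antimono:
  assumes "1 \<le> k" "k \<le> T"
  shows "Hsel T \<omega> \<subseteq> Hsel k \<omega>"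
  using assms(2)
proof (induction T rule: dec_induct)
  case (step T)
  then show ?case using Hsel_mono[of T \<omega>] assms(1) by auto
qed simp

lemma Hsel_subset_HT: "1 \<le> k \<Longrightarrow> Hsel k \<omega> \<subseteq> HT"
  using Hsel_antimono[of 1 k \<omega>] Hsel_1 by simp

text \<open>Pairs that have left the candidate set contribute 0, so the increments stay adapted whatever
  the selection rule; since candidate sets only shrink, a pair alive at time T was alive in every
  earlier round.\<close>

definition deviation_step ::
    "('x \<Rightarrow> 'z) \<Rightarrow> ('x \<Rightarrow> 'z) \<Rightarrow> nat \<Rightarrow> (nat \<Rightarrow> ('x \<times> 'y) \<times> real) \<Rightarrow> real" where
  "deviation_step h h' k \<omega> =
     (if h \<in> Hsel k \<omega> \<and> h' \<in> Hsel k \<omega>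
      then iw_loss loss (Hsel k \<omega>) h (\<omega> k) - iw_loss loss (Hsel k \<omega>) h' (\<omega> k)
        - (gen_err D loss h - gen_err D loss h')
      else 0)"

lemma deviation_step_prefix:
  "(\<forall>j\<le>k. \<omega> j = \<omega>' j) \<Longrightarrow> deviation_step h h' k \<omega> = deviation_step h h' k \<omega>'"
  using Hsel_past[of k \<omega> \<omega>'] by (simp add: deviation_step_def)

lemma borel_measurable_deviation_step:
  assumes "k \<ge> 1"
  shows "deviation_step h h' k \<in> borel_measurable rounds.S"
  unfolding deviation_step_def
proof (rule borel_measurable_finite_set_valued[where B=HT and F="Hsel k"])
  fix Hs assume "Hs \<subseteq> HT"
  show "(\<lambda>\<omega>. if h \<in> Hs \<and> h' \<in> Hs
        then iw_loss loss Hs h (\<omega> k) - iw_loss loss Hs h' (\<omega> k) - (gen_err D loss h - gen_err D loss h')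
        else 0) \<in> borel_measurable rounds.S"
  proof (cases "h \<in> Hs \<and> h' \<in> Hs")
    case True
    then have [measurable]: "iw_loss loss Hs h \<in> borel_measurable (D \<Otimes>\<^sub>M uniform01)"
        "iw_loss loss Hs h' \<in> borel_measurable (D \<Otimes>\<^sub>M uniform01)"
      using borel_measurable_iw_loss[OF \<open>Hs \<subseteq> HT\<close>] \<open>Hs \<subseteq> HT\<close> by auto
    show ?thesis unfolding if_P[OF True] by measurable
  next
    case False
    show ?thesis unfolding if_not_P[OF False] by simp
  qed
qed (use finite_HT Hsel_subset_HT[OF assms] Hsel_meas in \<open>auto simp: sample_space_eq\<close>)

lemma deviation_step_mgf_le:
  assumes "k \<ge> 1"
  shows "(\<integral>\<^sup>+s. ennreal (exp (l * deviation_step h h' k (fun_upd \<omega> k s))) \<partial>(D \<Otimes>\<^sub>M uniform01))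
    \<le> ennreal (exp (l\<^sup>2 / 2))"
proof -
  have Hsel_upd: "Hsel k (fun_upd \<omega> k s) = Hsel k \<omega>" for s
    by (rule Hsel_past) simp
  show ?thesis
  proof (cases "h \<in> Hsel k \<omega> \<and> h' \<in> Hsel k \<omega>")
    case True
    then show ?thesis
      using iw_loss_diff_mgf_le[OF Hsel_subset_HT[OF assms]] by (simp add: deviation_step_def Hsel_upd)
  next
    case False
    then show ?thesis
      by (auto simp: deviation_step_def Hsel_upd rounds.M.emeasure_space_1)
  qed
qed

lemma sum_deviation_step:
  assumes "T \<ge> 1" "h \<in> Hsel T \<omega>" "h' \<in> Hsel T \<omega>"
  shows "(\<Sum>k = 1..T. deviation_step h h' k \<omega>)
    = real T * (iw_err loss Hsel T h \<omega> - iw_err loss Hsel T h' \<omega>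
        - (gen_err D loss h - gen_err D loss h'))" (is "_ = ?rhs")
proof -
  have "(\<Sum>k = 1..T. deviation_step h h' k \<omega>) = (\<Sum>k = 1..T. iw_loss loss (Hsel k \<omega>) h (\<omega> k)
      - iw_loss loss (Hsel k \<omega>) h' (\<omega> k) - (gen_err D loss h - gen_err D loss h'))"
    using Hsel_antimono[of _ T \<omega>] assms by (intro sum.cong) (auto simp: deviation_step_def)
  also have "\<dots> = (\<Sum>k = 1..T. iw_loss loss (Hsel k \<omega>) h (\<omega> k))
      - (\<Sum>k = 1..T. iw_loss loss (Hsel k \<omega>) h' (\<omega> k))
      - real T * (gen_err D loss h - gen_err D loss h')"
    by (simp add: sum_subtractf)
  also have "\<dots> = ?rhs"
    using assms(1) by (simp add: iw_err_eq_sum_iw_loss right_diff_distrib)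
  finally show ?thesis .
qed

definition large_deviation :: "nat \<Rightarrow> real \<Rightarrow> (nat \<Rightarrow> ('x \<times> 'y) \<times> real) set" where
  "large_deviation T \<epsilon> = {\<omega> \<in> space rounds.S.
     \<exists>p \<in> HT \<times> HT. real T * \<epsilon> \<le> \<bar>\<Sum>k = 1..T. deviation_step (fst p) (snd p) k \<omega>\<bar>}"

lemma large_deviation_pairwise:
  "large_deviation T \<epsilon> = (\<Union>p \<in> HT \<times> HT.
     {\<omega> \<in> space rounds.S. real T * \<epsilon> \<le> \<bar>\<Sum>k = 1..T. deviation_step (fst p) (snd p) k \<omega>\<bar>})"
  unfolding large_deviation_def by blast

lemma deviation_event_in_events:
  "{\<omega> \<in> space rounds.S. real T * \<epsilon> \<le> \<bar>\<Sum>k = 1..T. deviation_step h h' k \<omega>\<bar>} \<in> rounds.events"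
proof -
  have [measurable]: "(\<lambda>\<omega>. \<Sum>k = 1..T. deviation_step h h' k \<omega>) \<in> borel_measurable rounds.S"
    using borel_measurable_deviation_step by auto
  show ?thesis by measurable
qed

lemma large_deviation_in_events: "large_deviation T \<epsilon> \<in> rounds.events"
  unfolding large_deviation_pairwise
  by (intro sets.finite_UN) (use finite_HT deviation_event_in_events in blast)+

lemma prob_large_deviation_le:
  assumes "T \<ge> 1" "HT \<noteq> {}" "0 < \<delta>" "\<delta> < 1"
  shows "rounds.prob (large_deviation T (Delta T (card HT) \<delta>)) \<le> \<delta> / (real T * (real T + 1))"
proof -
  let ?\<Delta> = "Delta T (card HT) \<delta>" and ?n = "real (card HT)"
  have "card HT \<ge> 1"
    using assms(2) finite_HT by (simp add: Suc_le_eq card_gt_0_iff)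
  note \<Delta>_facts = Delta_pos[OF assms(1) this assms(3,4)] exp_Delta[OF assms(1) this assms(3,4)]
  have "rounds.prob (large_deviation T ?\<Delta>) \<le> (\<Sum>p \<in> HT \<times> HT.
      rounds.prob {\<omega> \<in> space rounds.S. real T * ?\<Delta> \<le> \<bar>\<Sum>k = 1..T. deviation_step (fst p) (snd p) k \<omega>\<bar>})"
    unfolding large_deviation_pairwise
    by (intro rounds.finite_measure_subadditive_finite)
       (use finite_HT deviation_event_in_events in blast)+
  also have "\<dots> \<le> (\<Sum>p \<in> HT \<times> HT. 2 * exp (- real T * ?\<Delta>\<^sup>2 / 2))"
    by (intro sum_mono rounds.measure_abs_sum_ge_le)
       (use borel_measurable_deviation_step deviation_step_prefix deviation_step_mgf_le \<Delta>_facts(1)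
         in auto)
  also have "\<dots> = real (card (HT \<times> HT)) * (2 * (\<delta> / (2 * real T * (real T + 1) * ?n\<^sup>2)))"
    by (subst \<Delta>_facts(2)) simp
  also have "\<dots> = \<delta> / (real T * (real T + 1))"
    using \<open>card HT \<ge> 1\<close> by (simp add: card_cartesian_product power2_eq_square)
  finally show ?thesis .
qed

theorem uniform_deviation_bound:
  assumes "HT \<noteq> {}" "0 < \<delta>"
  shows "\<exists>A \<in> sets (sample_space D). measure (sample_space D) A \<ge> 1 - \<delta> \<and>
    (\<forall>\<omega>\<in>A. \<forall>T\<ge>1. \<forall>h\<in>Hsel T \<omega>. \<forall>h'\<in>Hsel T \<omega>.
       \<bar>iw_err loss Hsel T h \<omega> - iw_err loss Hsel T h' \<omega> - (gen_err D loss h - gen_err D loss h')\<bar>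
       \<le> Delta T (card HT) \<delta>)"
proof (cases "\<delta> < 1")
  case False
  then show ?thesis by (intro bexI[of _ "{}"]) auto
next
  case True
  define bad where "bad = (\<Union>T\<in>{1..}. large_deviation T (Delta T (card HT) \<delta>))"
  have bad_event: "bad \<in> rounds.events"
    unfolding bad_def using large_deviation_in_events by auto
  have "rounds.prob bad \<le> \<delta>"
    unfolding bad_def using large_deviation_in_events prob_large_deviation_le assms True
    by (intro rounds.prob_UN_le_telescoping) auto
  then have "rounds.prob (space rounds.S - bad) \<ge> 1 - \<delta>"
    using rounds.prob_compl[OF bad_event] by simp
  moreover have "\<bar>iw_err loss Hsel T h \<omega> - iw_err loss Hsel T h' \<omega>
      - (gen_err D loss h - gen_err D loss h')\<bar> \<le> Delta T (card HT) \<delta>"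
    if "\<omega> \<in> space rounds.S - bad" "T \<ge> 1" "h \<in> Hsel T \<omega>" "h' \<in> Hsel T \<omega>" for \<omega> T h h'
  proof -
    have "\<omega> \<notin> large_deviation T (Delta T (card HT) \<delta>)"
      using that(1,2) by (auto simp: bad_def)
    moreover have "(h, h') \<in> HT \<times> HT"
      using Hsel_subset_HT[OF that(2)] that(3,4) by auto
    ultimately have "\<bar>\<Sum>k = 1..T. deviation_step h h' k \<omega>\<bar> < real T * Delta T (card HT) \<delta>"
      using that(1) by (auto simp: large_deviation_def not_le)
    then have "real T * \<bar>iw_err loss Hsel T h \<omega> - iw_err loss Hsel T h' \<omega>
        - (gen_err D loss h - gen_err D loss h')\<bar> < real T * Delta T (card HT) \<delta>"
      using sum_deviation_step[OF that(2-4)] by (simp add: abs_mult)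
    with that(2) show ?thesis by simp
  qed
  ultimately show ?thesis
    using bad_event by (intro bexI[of _ "space rounds.S - bad"]) (auto simp: sample_space_eq)
qed

end

theorem lemma7:
  fixes D :: "('x \<times> 'y) measure"
    and loss :: "'z \<Rightarrow> 'y \<Rightarrow> real"
    and H HT :: "('x \<Rightarrow> 'z) set"
    and hstar hT :: "'x \<Rightarrow> 'z"
    and eps \<delta> :: real
    and Hsel :: "nat \<Rightarrow> (nat \<Rightarrow> ('x \<times> 'y) \<times> real) \<Rightarrow> ('x \<Rightarrow> 'z) set"
  assumes D: "prob_space D"
    and loss_range: "\<And>z y. 0 \<le> loss z y \<and> loss z y \<le> 1"
    and loss_meas: "\<And>h. h \<in> HT \<Longrightarrow> (\<lambda>p. loss (h (fst p)) (snd p)) \<in> borel_measurable D"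
    and dis_meas: "\<And>h h'. h \<in> HT \<Longrightarrow> h' \<in> HT \<Longrightarrow>
                     (\<lambda>p. pt_dis loss h h' (fst p)) \<in> borel_measurable D"
    and hstar: "hstar \<in> H" "\<forall>h\<in>H. gen_err D loss hstar \<le> gen_err D loss h"
    and hT_teach: "err_dis D loss hstar hT < eps"
    and HT_fin: "finite HT"
    and hT: "hT \<in> HT" "\<forall>h\<in>HT. gen_err D loss hT \<le> gen_err D loss h"
    and H1: "\<And>\<omega>. Hsel 1 \<omega> = HT"
    and Hmono: "\<And>t \<omega>. t \<ge> 1 \<Longrightarrow> Hsel (Suc t) \<omega> \<subseteq> Hsel t \<omega>"
    and Hpast: "\<And>t \<omega> \<omega>'. (\<forall>k<t. \<omega> k = \<omega>' k) \<Longrightarrow> Hsel t \<omega> = Hsel t \<omega>'"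
    and Hmeas: "\<And>t h. {\<omega> \<in> space (sample_space D). h \<in> Hsel t \<omega>} \<in> sets (sample_space D)"
    and \<delta>: "\<delta> > 0"
  shows "\<exists>A \<in> sets (sample_space D).
           measure (sample_space D) A \<ge> 1 - \<delta> \<and>
           (\<forall>\<omega>\<in>A. \<forall>T::nat. T \<ge> 1 \<longrightarrow> (\<forall>h\<in>Hsel T \<omega>. \<forall>h'\<in>Hsel T \<omega>.
              \<bar>iw_err loss Hsel T h \<omega> - iw_err loss Hsel T h' \<omega>
                 - (gen_err D loss h - gen_err D loss h')\<bar>
              \<le> (1 + err_dis D loss h h') * Delta T (card HT) \<delta>))"
proof -
  interpret active_learning_run D loss HT Hsel
    by (intro active_learning_run.intro finite_hypothesis_class.intro active_learning_run_axioms.intro)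
       (fact assms)+
  obtain A where "A \<in> sets (sample_space D)" "measure (sample_space D) A \<ge> 1 - \<delta>"
    and deviation: "\<And>\<omega> T h h'. \<omega> \<in> A \<Longrightarrow> T \<ge> 1 \<Longrightarrow> h \<in> Hsel T \<omega> \<Longrightarrow> h' \<in> Hsel T \<omega> \<Longrightarrow>
      \<bar>iw_err loss Hsel T h \<omega> - iw_err loss Hsel T h' \<omega> - (gen_err D loss h - gen_err D loss h')\<bar>
      \<le> Delta T (card HT) \<delta>"
    using uniform_deviation_bound[of \<delta>] hT(1) \<delta> by blast
  show ?thesis
  proof (intro bexI[of _ A] conjI ballI allI impI)
    fix \<omega> T h h' assume "\<omega> \<in> A" "1 \<le> T" "h \<in> Hsel T \<omega>" "h' \<in> Hsel T \<omega>"
    from deviation[OF this] have bound: "\<bar>iw_err loss Hsel T h \<omega> - iw_err loss Hsel T h' \<omega>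
        - (gen_err D loss h - gen_err D loss h')\<bar> \<le> Delta T (card HT) \<delta>" .
    then have "0 \<le> Delta T (card HT) \<delta>"
      by (rule order_trans[OF abs_ge_zero])
    moreover have "0 \<le> err_dis D loss h h'"
      by (rule err_dis_nonneg) (rule loss_range)
    ultimately have "Delta T (card HT) \<delta> \<le> (1 + err_dis D loss h h') * Delta T (card HT) \<delta>"
      by (simp add: mult_le_cancel_right1)
    with bound show "\<bar>iw_err loss Hsel T h \<omega> - iw_err loss Hsel T h' \<omega>
        - (gen_err D loss h - gen_err D loss h')\<bar> \<le> (1 + err_dis D loss h h') * Delta T (card HT) \<delta>"
      by (rule order_trans)
  qed fact+
qed

end
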